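(* For the root system of type $C_3$ (Bourbaki numbering, $\alpha_3$ long) one has $\partial_3(x_3)=\partial_2\partial_3\partial_2(x_2^3)=\partial_1\partial_2\partial_3\partial_2\partial_1(x_1^5)=1$, and consequently $\partial_1\partial_2\partial_3\partial_2\partial_1\partial_2\partial_3\partial_2\partial_3(x_1^5x_2^3x_3)=1$ and $ud(C_3)=9$. Likewise, for type $C_2$, $ud(C_2)=4$.
   Context: For a semisimple finite root system $\Sigma$ of rank $n$ with simple roots $\alpha_1,\dots,\alpha_n$, Cartan matrix $c_{i,j}=\alpha_j^\vee(\alpha_i)$ and fundamental weights $x_1,\dots,x_n$ with $\alpha_i=\sum_jc_{i,j}x_j$: let $S=\mathbb{Z}[x_1,\dots,x_n]$, $y_i:=x_i-\alpha_i$, $s_i$ the ring automorphism of $S$ with $s_i(x_i)=y_i$, $s_i(x_j)=x_j$ ($j\ne i$), $\partial_i(p)=(p-s_i(p))/(x_i-y_i)$, and for $w\in W$ with reduced word $s_{i_1}\cdots s_{i_l}$, $\partial_w=\partial_{i_1}\circ\cdots\circ\partial_{i_l}$. The unimodular degree $ud(\Sigma)$ is the maximum of $\deg p$ over monic monomials $p\in S$ such that $\partial_w(p)=1$ for some $w\in W$ (the Weyl group). *)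

theory Defs
  imports "HOL-Library.Poly_Mapping"
begin

text \<open>The polynomial ring S = Z[x_1,...,x_n]: a polynomial is a finitely supported
  map from monomials (finitely supported exponent vectors, nat =>0 nat) to integer
  coefficients; multiplication is the convolution product of Poly_Mapping.\<close>

type_synonym mpoly = "(nat \<Rightarrow>\<^sub>0 nat) \<Rightarrow>\<^sub>0 int"

definition const :: "int \<Rightarrow> mpoly" where
  "const a = Poly_Mapping.single 0 a"

text \<open>the variable x_i (fundamental weight)\<close>
definition X :: "nat \<Rightarrow> mpoly" where
  "X i = Poly_Mapping.single (Poly_Mapping.single i 1) 1"

definition monom :: "(nat \<Rightarrow>\<^sub>0 nat) \<Rightarrow> mpoly" where
  "monom m = Poly_Mapping.single m 1"

definition mdeg :: "(nat \<Rightarrow>\<^sub>0 nat) \<Rightarrow> nat" where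
  "mdeg m = (\<Sum>v\<in>Poly_Mapping.keys m. Poly_Mapping.lookup m v)"

definition subst :: "(nat \<Rightarrow> mpoly) \<Rightarrow> mpoly \<Rightarrow> mpoly" where
  "subst \<sigma> p = (\<Sum>m\<in>Poly_Mapping.keys p. const (Poly_Mapping.lookup p m) * (\<Prod>v\<in>Poly_Mapping.keys m. \<sigma> v ^ Poly_Mapping.lookup m v))"

text \<open>Root system data: rank n and Cartan matrix c (indices 1..n),
  c i j = alpha_j^vee(alpha_i); alpha_i = sum_j c_{i,j} x_j.\<close>
definition alpha :: "nat \<Rightarrow> (nat \<Rightarrow> nat \<Rightarrow> int) \<Rightarrow> nat \<Rightarrow> mpoly" where
  "alpha n c i = (\<Sum>j\<in>{1..n}. const (c i j) * X j)"

definition y :: "nat \<Rightarrow> (nat \<Rightarrow> nat \<Rightarrow> int) \<Rightarrow> nat \<Rightarrow> mpoly" where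
  "y n c i = X i - alpha n c i"

definition refl :: "nat \<Rightarrow> (nat \<Rightarrow> nat \<Rightarrow> int) \<Rightarrow> nat \<Rightarrow> mpoly \<Rightarrow> mpoly" where
  "refl n c i = subst (\<lambda>j. if j = i then y n c i else X j)"

definition dd :: "nat \<Rightarrow> (nat \<Rightarrow> nat \<Rightarrow> int) \<Rightarrow> nat \<Rightarrow> mpoly \<Rightarrow> mpoly" where
  "dd n c i p = (THE q. p - refl n c i p = (X i - y n c i) * q)"

definition wact :: "nat \<Rightarrow> (nat \<Rightarrow> nat \<Rightarrow> int) \<Rightarrow> nat list \<Rightarrow> mpoly \<Rightarrow> mpoly" where
  "wact n c ws = foldr (\<lambda>i f. refl n c i \<circ> f) ws id"

definition ddw :: "nat \<Rightarrow> (nat \<Rightarrow> nat \<Rightarrow> int) \<Rightarrow> nat list \<Rightarrow> mpoly \<Rightarrow> mpoly" where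
  "ddw n c ws = foldr (\<lambda>i f. dd n c i \<circ> f) ws id"

definition reduced :: "nat \<Rightarrow> (nat \<Rightarrow> nat \<Rightarrow> int) \<Rightarrow> nat list \<Rightarrow> bool" where
  "reduced n c ws \<longleftrightarrow> set ws \<subseteq> {1..n} \<and>
     (\<forall>vs. set vs \<subseteq> {1..n} \<and> wact n c vs = wact n c ws \<longrightarrow> length ws \<le> length vs)"

text \<open>unimodular degree: maximal degree of a monic monomial p with d_w(p) = 1 for some w in W
  (d_w computed along a reduced word of w)\<close>
definition ud :: "nat \<Rightarrow> (nat \<Rightarrow> nat \<Rightarrow> int) \<Rightarrow> nat" where
  "ud n c = Max {mdeg m | m. \<exists>ws. reduced n c ws \<and> ddw n c ws (monom m) = 1}"

text \<open>Cartan matrices, Bourbaki numbering: C_3 (alpha_3 long), C_2 (alpha_2 long).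
  alpha_1 = 2x_1 - x_2, alpha_2 = -x_1 + 2x_2 - x_3, alpha_3 = -2x_2 + 2x_3 for C_3;
  alpha_1 = 2x_1 - x_2, alpha_2 = -2x_1 + 2x_2 for C_2.\<close>
definition cartanC3 :: "nat \<Rightarrow> nat \<Rightarrow> int" where
  "cartanC3 i j = (if i = j then 2
     else if (i, j) = (1, 2) \<or> (i, j) = (2, 1) \<or> (i, j) = (2, 3) then -1
     else if (i, j) = (3, 2) then -2 else 0)"

definition cartanC2 :: "nat \<Rightarrow> nat \<Rightarrow> int" where
  "cartanC2 i j = (if i = j then 2
     else if (i, j) = (1, 2) then -1
     else if (i, j) = (2, 1) then -2 else 0)"

end

theory Submission
  imports Defs
begin

text \<open>Each divided difference lowers the degree of a homogeneous polynomial by one and kills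
  constants, so a monic monomial p with \<open>\<partial>\<^sub>w p = 1\<close> has degree exactly the length of w;
  hence ud is at most the length of the longest element \<open>w\<^sub>0\<close> of W, with equality as soon as
  \<open>\<partial>\<^bsub>w\<^sub>0\<^esub>\<close> sends some monic monomial to 1. An element of W is determined by the integer matrix of its
  action on \<open>x\<^sub>1, \<dots>, x\<^sub>n\<close>, and a table of 48 (resp. 8) words closed under left
  multiplication by the simple reflections shows that reduced words have length at most 9
  (resp. 4) and that the given words are reduced. The values of \<open>\<partial>\<^sub>w\<close> are computed step by
  step, using that \<open>\<partial>\<^sub>i\<close> commutes with multiplication by \<open>s\<^sub>i\<close>-invariant polynomials.\<close>

section \<open>Substitution homomorphisms\<close>

lemma const_eq_of_int: "const a = of_int a"
  by (simp add: const_def flip: single_of_int)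

definition eval_monomial :: "(nat \<Rightarrow> mpoly) \<Rightarrow> (nat \<Rightarrow>\<^sub>0 nat) \<Rightarrow> mpoly" where
  "eval_monomial \<sigma> m = (\<Prod>v\<in>Poly_Mapping.keys m. \<sigma> v ^ Poly_Mapping.lookup m v)"

lemma eval_monomial_superset:
  assumes "finite S" "Poly_Mapping.keys m \<subseteq> S"
  shows "eval_monomial \<sigma> m = (\<Prod>v\<in>S. \<sigma> v ^ Poly_Mapping.lookup m v)"
  unfolding eval_monomial_def using assms
  by (intro prod.mono_neutral_left) (auto simp: in_keys_iff)

lemma eval_monomial_add: "eval_monomial \<sigma> (a + b) = eval_monomial \<sigma> a * eval_monomial \<sigma> b"
proof -
  let ?S = "Poly_Mapping.keys a \<union> Poly_Mapping.keys b"
  have "eval_monomial \<sigma> (a + b) = (\<Prod>v\<in>?S. \<sigma> v ^ Poly_Mapping.lookup (a + b) v)"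
    by (rule eval_monomial_superset) (auto simp: keys_add)
  also have "\<dots> = eval_monomial \<sigma> a * eval_monomial \<sigma> b"
    by (simp add: lookup_add power_add prod.distrib eval_monomial_superset[of ?S])
  finally show ?thesis .
qed

lemma eval_monomial_single [simp]: "eval_monomial \<sigma> (Poly_Mapping.single v k) = \<sigma> v ^ k"
  by (cases "k = 0") (simp_all add: eval_monomial_def)

lemma subst_eq_sum:
  "subst \<sigma> p = (\<Sum>m\<in>Poly_Mapping.keys p. of_int (Poly_Mapping.lookup p m) * eval_monomial \<sigma> m)"
  by (simp add: subst_def const_eq_of_int eval_monomial_def)

lemma subst_superset:
  assumes "finite S" "Poly_Mapping.keys p \<subseteq> S"
  shows "subst \<sigma> p = (\<Sum>m\<in>S. of_int (Poly_Mapping.lookup p m) * eval_monomial \<sigma> m)"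
  unfolding subst_eq_sum using assms
  by (intro sum.mono_neutral_left) (auto simp: in_keys_iff)

lemma subst_add [simp]: "subst \<sigma> (p + q) = subst \<sigma> p + subst \<sigma> q"
proof -
  let ?S = "Poly_Mapping.keys p \<union> Poly_Mapping.keys q"
  have "subst \<sigma> (p + q) = (\<Sum>m\<in>?S. of_int (Poly_Mapping.lookup (p + q) m) * eval_monomial \<sigma> m)"
    by (rule subst_superset) (auto simp: keys_add)
  also have "\<dots> = subst \<sigma> p + subst \<sigma> q"
    by (simp add: lookup_add distrib_right sum.distrib subst_superset[of ?S])
  finally show ?thesis .
qed

lemma subst_diff [simp]: "subst \<sigma> (p - q) = subst \<sigma> p - subst \<sigma> q"
proof -
  let ?S = "Poly_Mapping.keys p \<union> Poly_Mapping.keys q"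
  have "subst \<sigma> (p - q) = (\<Sum>m\<in>?S. of_int (Poly_Mapping.lookup (p - q) m) * eval_monomial \<sigma> m)"
    by (rule subst_superset) (auto simp: keys_diff)
  also have "\<dots> = subst \<sigma> p - subst \<sigma> q"
    by (simp add: lookup_minus left_diff_distrib sum_subtractf subst_superset[of ?S])
  finally show ?thesis .
qed

lemma subst_0 [simp]: "subst \<sigma> 0 = 0"
  by (simp add: subst_def)

lemma subst_single: "subst \<sigma> (Poly_Mapping.single m a) = of_int a * eval_monomial \<sigma> m"
  by (cases "a = 0") (simp_all add: subst_eq_sum)

lemma subst_mult [simp]: "subst \<sigma> (p * q) = subst \<sigma> p * subst \<sigma> q"
proof (induction p arbitrary: q rule: frag_induction[OF subset_UNIV])
  case (2 m)
  show ?case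
    by (induction q rule: frag_induction[OF subset_UNIV])
      (simp_all add: mult_single subst_single eval_monomial_add right_diff_distrib)
qed (simp_all add: left_diff_distrib)

lemma subst_of_int [simp]: "subst \<sigma> (of_int a) = of_int a"
  using subst_single[of \<sigma> 0 a] by (simp add: eval_monomial_def flip: single_of_int)

lemma subst_1 [simp]: "subst \<sigma> 1 = 1"
  using subst_of_int[of \<sigma> 1] by simp

lemma subst_numeral [simp]: "subst \<sigma> (numeral k) = numeral k"
  using subst_of_int[of \<sigma> "numeral k"] by simp

lemma subst_power [simp]: "subst \<sigma> (p ^ k) = subst \<sigma> p ^ k"
  by (induction k) simp_all

lemma subst_sum [simp]: "subst \<sigma> (sum f A) = (\<Sum>a\<in>A. subst \<sigma> (f a))"
  by (induction A rule: infinite_finite_induct) simp_all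

lemma subst_prod [simp]: "subst \<sigma> (prod f A) = (\<Prod>a\<in>A. subst \<sigma> (f a))"
  by (induction A rule: infinite_finite_induct) simp_all

lemma subst_X [simp]: "subst \<sigma> (X j) = \<sigma> j"
  by (simp add: X_def subst_single)

lemma subst_subst: "subst \<sigma> (subst \<rho> p) = subst (\<lambda>v. subst \<sigma> (\<rho> v)) p"
  by (simp add: subst_eq_sum[of \<rho>] subst_eq_sum[of "\<lambda>v. subst \<sigma> (\<rho> v)"] eval_monomial_def)

lemma X_power: "X v ^ k = monom (Poly_Mapping.single v k)"
  by (induction k) (simp_all add: X_def monom_def mult_single flip: single_add)

lemma monom_add: "monom (a + b) = monom a * monom b"
  by (simp add: monom_def mult_single)

lemma eval_monomial_X: "eval_monomial X m = monom m"
proof (induction m rule: update_induct)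
  case (update m v k)
  then have "Poly_Mapping.update v k m = m + Poly_Mapping.single v k"
    by (intro poly_mapping_eqI)
      (auto simp: Poly_Mapping.lookup_update lookup_add lookup_single in_keys_iff when_def)
  then show ?case
    using update.IH by (simp add: eval_monomial_add monom_add X_power)
qed (simp add: eval_monomial_def monom_def)

lemma subst_X_self: "subst X p = p"
  by (induction p rule: frag_induction[OF subset_UNIV])
    (simp_all add: subst_single eval_monomial_X monom_def)

section \<open>Simple reflections and divided differences\<close>

lemma X_minus_y: "X i - y n c i = alpha n c i"
  by (simp add: y_def)

lemma refl_X: "refl n c i (X j) = (if j = i then X i - alpha n c i else X j)"
  by (simp add: refl_def y_def)

lemma refl_simps [simp]:
  "refl n c i (p + q) = refl n c i p + refl n c i q"
  "refl n c i (p - q) = refl n c i p - refl n c i q"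
  "refl n c i (p * q) = refl n c i p * refl n c i q"
  "refl n c i (p ^ k) = refl n c i p ^ k"
  "refl n c i (sum f A) = (\<Sum>a\<in>A. refl n c i (f a))"
  "refl n c i (numeral w) = numeral w"
  "refl n c i (of_int a) = of_int a"
  "refl n c i 1 = 1"
  "refl n c i 0 = 0"
  by (simp_all add: refl_def)

lemma single_eq_single_iff_key:
  "(e::'a::zero) \<noteq> 0 \<Longrightarrow> Poly_Mapping.single j e = Poly_Mapping.single k e \<longleftrightarrow> j = k"
  by (metis lookup_single_eq lookup_single_not_eq zero_neq_one)

definition linear_form :: "nat \<Rightarrow> (nat \<Rightarrow> int) \<Rightarrow> mpoly" where
  "linear_form n a = (\<Sum>k\<in>{1..n}. of_int (a k) * X k)"

lemma alpha_eq_linear_form: "alpha n c i = linear_form n (c i)"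
  by (simp add: alpha_def linear_form_def const_eq_of_int)

lemma lookup_linear_form:
  assumes "k \<in> {1..n}"
  shows "Poly_Mapping.lookup (linear_form n a) (Poly_Mapping.single k 1) = a k"
proof -
  have "Poly_Mapping.lookup (linear_form n a) (Poly_Mapping.single k 1)
      = (\<Sum>j\<in>{1..n}. if j = k then a j else 0)"
    unfolding linear_form_def lookup_sum
    by (intro sum.cong) (auto simp: X_def mult_single lookup_single when_def
        single_eq_single_iff_key simp flip: single_of_int)
  also have "\<dots> = a k"
    using assms by simp
  finally show ?thesis .
qed

lemma alpha_nonzero:
  assumes "i \<in> {1..n}" "c i i \<noteq> 0"
  shows "alpha n c i \<noteq> 0"
  using lookup_linear_form[of i n "c i"] assms by (auto simp: alpha_eq_linear_form)

lemma refl_diff_divisible: "\<exists>q. p - refl n c i p = alpha n c i * q"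
proof -
  define D where "D = {p. \<exists>q. p - refl n c i p = alpha n c i * q}"
  have diff: "a - b \<in> D" if a: "a \<in> D" and b: "b \<in> D" for a b
  proof -
    obtain qa qb where "a - refl n c i a = alpha n c i * qa" "b - refl n c i b = alpha n c i * qb"
      using a b by (auto simp: D_def)
    then have "(a - b) - refl n c i (a - b) = alpha n c i * (qa - qb)"
      by (simp add: algebra_simps)
    then show ?thesis by (auto simp: D_def)
  qed
  have mult: "a * b \<in> D" if a: "a \<in> D" and b: "b \<in> D" for a b
  proof -
    obtain qa qb where qa: "a - refl n c i a = alpha n c i * qa"
      and qb: "b - refl n c i b = alpha n c i * qb"
      using a b by (auto simp: D_def)
    have "a * b - refl n c i (a * b) = (a - refl n c i a) * b + refl n c i a * (b - refl n c i b)"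
      by (simp add: algebra_simps)
    also have "\<dots> = alpha n c i * (qa * b + refl n c i a * qb)"
      by (simp add: qa qb algebra_simps)
    finally show ?thesis by (auto simp: D_def)
  qed
  have zero: "0 \<in> D" and one: "1 \<in> D"
    by (auto simp: D_def intro: exI[of _ 0])
  have "X v \<in> D" for v
    by (cases "v = i") (auto simp: D_def refl_X intro: exI[of _ 1] exI[of _ 0])
  then have "X v ^ k \<in> D" for v k
    by (induction k) (simp_all add: one mult)
  then have "(\<Prod>v\<in>A. X v ^ f v) \<in> D" for A f
    by (induction A rule: infinite_finite_induct) (simp_all add: one mult)
  then have "monom m \<in> D" for m
    by (metis eval_monomial_X eval_monomial_def)
  then have "p \<in> D"
    by (induction p rule: frag_induction[OF subset_UNIV]) (simp_all add: zero diff monom_def)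
  then show ?thesis
    by (simp add: D_def)
qed

lemma dd_eqI:
  assumes "alpha n c i \<noteq> 0" "p - refl n c i p = alpha n c i * q"
  shows "dd n c i p = q"
  unfolding dd_def X_minus_y using assms by (intro the_equality) auto

lemma dd_X_self:
  assumes "alpha n c i \<noteq> 0"
  shows "dd n c i (X i) = 1"
  using assms by (intro dd_eqI) (simp_all add: refl_X)

lemma dd_mult_invariant:
  assumes "alpha n c i \<noteq> 0" "refl n c i a = a"
  shows "dd n c i (a * p) = a * dd n c i p"
proof -
  obtain q where q: "p - refl n c i p = alpha n c i * q"
    using refl_diff_divisible by blast
  have "a * p - refl n c i (a * p) = a * (p - refl n c i p)"
    using assms(2) by (simp add: right_diff_distrib)
  also have "\<dots> = alpha n c i * (a * q)"
    by (simp add: q mult.left_commute)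
  finally have "dd n c i (a * p) = a * q"
    by (rule dd_eqI[OF assms(1)])
  moreover have "dd n c i p = q"
    by (rule dd_eqI[OF assms(1) q])
  ultimately show ?thesis
    by simp
qed

lemma ddw_Nil [simp]: "ddw n c [] p = p"
  by (simp add: ddw_def)

lemma ddw_Cons [simp]: "ddw n c (i # ws) p = dd n c i (ddw n c ws p)"
  by (simp add: ddw_def)

lemma ddw_append: "ddw n c (us @ ws) p = ddw n c us (ddw n c ws p)"
  by (induction us) simp_all

lemma ddw_mult_invariant:
  assumes "\<forall>i\<in>set ws. alpha n c i \<noteq> 0 \<and> refl n c i a = a"
  shows "ddw n c ws (a * p) = a * ddw n c ws p"
  using assms by (induction ws) (simp_all add: dd_mult_invariant)

section \<open>Degree\<close>

lemma mdeg_superset: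
  assumes "finite S" "Poly_Mapping.keys m \<subseteq> S"
  shows "mdeg m = (\<Sum>v\<in>S. Poly_Mapping.lookup m v)"
  unfolding mdeg_def using assms by (intro sum.mono_neutral_left) (auto simp: in_keys_iff)

lemma mdeg_add: "mdeg (a + b) = mdeg a + mdeg b"
proof -
  let ?S = "Poly_Mapping.keys a \<union> Poly_Mapping.keys b"
  have "mdeg (a + b) = (\<Sum>v\<in>?S. Poly_Mapping.lookup (a + b) v)"
    by (rule mdeg_superset) (auto simp: keys_add)
  then show ?thesis
    by (simp add: lookup_add sum.distrib mdeg_superset[of ?S])
qed

lemma mdeg_single: "mdeg (Poly_Mapping.single v k) = k"
  by (cases "k = 0") (simp_all add: mdeg_def)

text \<open>The variable \<open>x\<^sub>0\<close> is not among \<open>x\<^sub>1, \<dots>, x\<^sub>n\<close>, so it can play the role of the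
  parameter t in \<open>p(t x) = t\<^sup>d p(x)\<close>.\<close>

definition scale :: "mpoly \<Rightarrow> mpoly" where
  "scale = subst (\<lambda>j. X 0 * X j)"

definition homogeneous :: "nat \<Rightarrow> mpoly \<Rightarrow> bool" where
  "homogeneous d p \<longleftrightarrow> scale p = X 0 ^ d * p"

lemma scale_simps [simp]:
  "scale (p + q) = scale p + scale q" "scale (p - q) = scale p - scale q"
  "scale (p * q) = scale p * scale q" "scale (p ^ k) = scale p ^ k"
  "scale 1 = 1" "scale 0 = 0" "scale (X j) = X 0 * X j"
  by (simp_all add: scale_def)

lemma scale_alpha: "scale (alpha n c i) = X 0 * alpha n c i"
  by (simp add: scale_def alpha_def const_eq_of_int sum_distrib_left algebra_simps)

lemma scale_refl:
  assumes "i \<noteq> 0"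
  shows "scale (refl n c i p) = refl n c i (scale p)"
proof -
  have "(\<lambda>v. scale (if v = i then y n c i else X v)) = (\<lambda>v. refl n c i (X 0 * X v))"
    using assms by (auto simp: refl_X y_def scale_alpha algebra_simps)
  then show ?thesis
    by (simp add: scale_def refl_def subst_subst)
qed

text \<open>No nonzero polynomial is homogeneous of degree -1: it would be divisible by every
  power of \<open>x\<^sub>0\<close>.\<close>

lemma X0_mult_scale_eq_self_imp_zero:
  assumes "X 0 * scale q = q"
  shows "q = 0"
proof (rule ccontr)
  have "\<exists>r. q = X 0 ^ k * r" for k
  proof (induction k)
    case (Suc k)
    then obtain r where "q = X 0 ^ k * r" by blast
    then have "q = X 0 * ((X 0 * X 0) ^ k * scale r)"
      using assms by simp
    then have "q = X 0 ^ Suc k * (X 0 ^ k * scale r)"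
      by (simp add: power_mult_distrib algebra_simps)
    then show ?case by blast
  qed simp
  assume "q \<noteq> 0"
  then obtain m where m: "m \<in> Poly_Mapping.keys q"
    by (metis keys_eq_empty ex_in_conv)
  obtain r where "q = monom (Poly_Mapping.single 0 (Suc (Poly_Mapping.lookup m 0))) * r"
    using \<open>\<And>k. \<exists>r. q = X 0 ^ k * r\<close> by (metis X_power)
  then obtain u where "m = Poly_Mapping.single 0 (Suc (Poly_Mapping.lookup m 0)) + u"
    using m keys_mult by (fastforce simp: monom_def)
  then have "Poly_Mapping.lookup m 0 = Suc (Poly_Mapping.lookup m 0) + Poly_Mapping.lookup u 0"
    by (metis lookup_add lookup_single_eq)
  then show False by simp
qed

lemma homogeneous_dd:
  assumes "i \<noteq> 0" "alpha n c i \<noteq> 0" "homogeneous d p"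
  shows "homogeneous (d - 1) (dd n c i p)"
proof -
  obtain q where q: "p - refl n c i p = alpha n c i * q"
    using refl_diff_divisible by blast
  have "alpha n c i * (X 0 * scale q) = scale (p - refl n c i p)"
    by (simp add: q scale_alpha algebra_simps)
  also have "\<dots> = X 0 ^ d * (p - refl n c i p)"
    using assms(1,3) by (simp add: homogeneous_def scale_refl refl_X right_diff_distrib)
  also have "\<dots> = alpha n c i * (X 0 ^ d * q)"
    by (simp add: q mult.left_commute)
  finally have scale_q: "X 0 * scale q = X 0 ^ d * q"
    using assms(2) by simp
  have "homogeneous (d - 1) q"
  proof (cases d)
    case 0
    then have "q = 0"
      using scale_q X0_mult_scale_eq_self_imp_zero by simp
    then show ?thesis
      by (simp add: homogeneous_def)
  next
    case (Suc e)
    then show ?thesis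
      using scale_q by (simp add: homogeneous_def X_def)
  qed
  then show ?thesis
    using dd_eqI[OF assms(2) q] by simp
qed

lemma homogeneous_ddw:
  assumes "\<forall>i\<in>set ws. i \<noteq> 0 \<and> alpha n c i \<noteq> 0" "homogeneous d p"
  shows "homogeneous (d - length ws) (ddw n c ws p)"
  using assms
proof (induction ws)
  case (Cons i ws)
  then have "homogeneous (d - length ws - 1) (dd n c i (ddw n c ws p))"
    by (intro homogeneous_dd) simp_all
  then show ?case
    by simp
qed simp

lemma homogeneous_monom: "homogeneous (mdeg m) (monom m)"
proof -
  have "scale (monom m) = (\<Prod>v\<in>Poly_Mapping.keys m. (X 0 * X v) ^ Poly_Mapping.lookup m v)"
    by (simp add: scale_def monom_def subst_single eval_monomial_def)
  also have "\<dots> = X 0 ^ mdeg m * monom m"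
    by (simp add: power_mult_distrib prod.distrib mdeg_def power_sum eval_monomial_def
        flip: eval_monomial_X)
  finally show ?thesis
    by (simp add: homogeneous_def)
qed

lemma homogeneous_1_iff: "homogeneous d 1 \<longleftrightarrow> d = 0"
proof
  assume "homogeneous d 1"
  then have "monom (Poly_Mapping.single 0 d) = 1"
    by (simp add: homogeneous_def X_power)
  then have "Poly_Mapping.lookup (1::mpoly) (Poly_Mapping.single 0 d) = 1"
    by (metis monom_def lookup_single_eq)
  then have "Poly_Mapping.single (0::nat) d = 0"
    by (simp add: lookup_one when_def split: if_splits)
  then show "d = 0"
    by (metis lookup_single_eq lookup_zero)
qed (simp add: homogeneous_def)

lemma mdeg_le_length_if_ddw_eq_1:
  assumes "\<forall>i\<in>set ws. i \<noteq> 0 \<and> alpha n c i \<noteq> 0" "ddw n c ws (monom m) = 1"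
  shows "mdeg m \<le> length ws"
  using homogeneous_ddw[OF assms(1) homogeneous_monom[of m]] assms(2) by (simp add: homogeneous_1_iff)

section \<open>Weyl group elements as integer matrices\<close>

lemma refl_linear_form:
  assumes "i \<in> {1..n}"
  shows "refl n c i (linear_form n a) = linear_form n (\<lambda>k. a k - a i * c i k)"
proof -
  have "refl n c i (linear_form n a)
      = (\<Sum>k\<in>{1..n}. of_int (a k) * X k - (if k = i then of_int (a i) * alpha n c i else 0))"
    unfolding linear_form_def refl_simps(5) by (intro sum.cong) (auto simp: refl_X algebra_simps)
  also have "\<dots> = linear_form n a - of_int (a i) * linear_form n (c i)"
    using assms by (simp add: sum_subtractf linear_form_def alpha_eq_linear_form)
  also have "\<dots> = linear_form n (\<lambda>k. a k - a i * c i k)"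
    by (simp add: linear_form_def sum_distrib_left sum_subtractf algebra_simps)
  finally show ?thesis .
qed

lemma wact_Nil [simp]: "wact n c [] p = p"
  by (simp add: wact_def)

lemma wact_Cons [simp]: "wact n c (i # ws) p = refl n c i (wact n c ws p)"
  by (simp add: wact_def)

lemma wact_eq_subst: "wact n c ws p = subst (\<lambda>j. wact n c ws (X j)) p"
proof (induction ws arbitrary: p)
  case (Cons i ws)
  show ?case
    by (simp only: wact_Cons Cons.IH[of p]) (simp add: refl_def subst_subst)
qed (simp add: subst_X_self)

fun wcoeffs :: "(nat \<Rightarrow> nat \<Rightarrow> int) \<Rightarrow> nat list \<Rightarrow> nat \<Rightarrow> nat \<Rightarrow> int" where
  "wcoeffs c [] j = (\<lambda>k. if k = j then 1 else 0)"
| "wcoeffs c (i # ws) j = (\<lambda>k. wcoeffs c ws j k - wcoeffs c ws j i * c i k)"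

lemma wact_X_eq_linear_form:
  assumes "set ws \<subseteq> {1..n}" "j \<in> {1..n}"
  shows "wact n c ws (X j) = linear_form n (wcoeffs c ws j)"
  using assms
proof (induction ws)
  case Nil
  have "linear_form n (\<lambda>k. if k = j then 1 else 0) = (\<Sum>k\<in>{1..n}. if k = j then X k else 0)"
    unfolding linear_form_def by (intro sum.cong) auto
  with Nil.prems show ?case
    by simp
qed (simp add: refl_linear_form)

lemma wact_X_outside:
  assumes "set ws \<subseteq> {1..n}" "j \<notin> {1..n}"
  shows "wact n c ws (X j) = X j"
  using assms by (induction ws) (auto simp: refl_X)

definition wmatrix :: "nat \<Rightarrow> (nat \<Rightarrow> nat \<Rightarrow> int) \<Rightarrow> nat list \<Rightarrow> int list list" where
  "wmatrix n c ws = map (\<lambda>j. map (wcoeffs c ws j) [1..<n+1]) [1..<n+1]"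

lemma wmatrix_eq_iff:
  "wmatrix n c v = wmatrix n c w \<longleftrightarrow> (\<forall>j\<in>{1..n}. \<forall>k\<in>{1..n}. wcoeffs c v j k = wcoeffs c w j k)"
proof -
  have "set [1..<n+1] = {1..n}"
    by auto
  then show ?thesis
    unfolding wmatrix_def map_eq_conv by (simp only:)
qed

lemma wact_eq_iff_wmatrix_eq:
  assumes "set v \<subseteq> {1..n}" "set w \<subseteq> {1..n}"
  shows "wact n c v = wact n c w \<longleftrightarrow> wmatrix n c v = wmatrix n c w"
proof
  assume "wact n c v = wact n c w"
  then have forms: "linear_form n (wcoeffs c v j) = linear_form n (wcoeffs c w j)"
    if "j \<in> {1..n}" for j
    using assms that by (metis wact_X_eq_linear_form)
  show "wmatrix n c v = wmatrix n c w"
    unfolding wmatrix_eq_iff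
  proof (intro ballI)
    fix j k assume "j \<in> {1..n}" "k \<in> {1..n}"
    then show "wcoeffs c v j k = wcoeffs c w j k"
      using forms lookup_linear_form by metis
  qed
next
  assume "wmatrix n c v = wmatrix n c w"
  then have "linear_form n (wcoeffs c v j) = linear_form n (wcoeffs c w j)" if "j \<in> {1..n}" for j
    using that unfolding wmatrix_eq_iff linear_form_def by (intro sum.cong) simp_all
  then have "wact n c v (X j) = wact n c w (X j)" for j
    using assms by (cases "j \<in> {1..n}") (simp_all add: wact_X_eq_linear_form wact_X_outside)
  then have "(\<lambda>j. wact n c v (X j)) = (\<lambda>j. wact n c w (X j))"
    by (rule ext)
  then show "wact n c v = wact n c w"
    by (intro ext) (metis wact_eq_subst)
qed

text \<open>An entry \<open>(w, [v\<^sub>1, \<dots>, v\<^sub>n])\<close> records, for each simple reflection \<open>s\<^sub>i\<close>, a word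
  \<open>v\<^sub>i\<close> of the table representing \<open>s\<^sub>i w\<close> and at most one letter longer than w.\<close>

definition cayley_table :: "nat \<Rightarrow> (nat \<Rightarrow> nat \<Rightarrow> int) \<Rightarrow> (nat list \<times> nat list list) list \<Rightarrow> bool" where
  "cayley_table n c tab \<longleftrightarrow> [] \<in> fst ` set tab \<and>
     (\<forall>(w, succs)\<in>set tab. set w \<subseteq> {1..n} \<and> length succs = n \<and>
        (\<forall>(i, w')\<in>set (zip [1..<n+1] succs). w' \<in> fst ` set tab \<and> length w' \<le> Suc (length w) \<and>
           wmatrix n c (i # w) = wmatrix n c w'))"

lemma cayley_table_letters:
  assumes "cayley_table n c tab" "w \<in> fst ` set tab"
  shows "set w \<subseteq> {1..n}"
  using assms unfolding cayley_table_def by fastforce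

lemma cayley_table_step:
  assumes tab: "cayley_table n c tab" and w: "w \<in> fst ` set tab" and i: "i \<in> {1..n}"
  shows "\<exists>w'\<in>fst ` set tab. wact n c (i # w) = wact n c w' \<and> length w' \<le> Suc (length w)"
proof -
  obtain succs where entry: "(w, succs) \<in> set tab"
    using w by force
  then have w_letters: "set w \<subseteq> {1..n}" and len: "length succs = n"
    and succs: "\<forall>(i, w')\<in>set (zip [1..<n+1] succs). w' \<in> fst ` set tab \<and>
        length w' \<le> Suc (length w) \<and> wmatrix n c (i # w) = wmatrix n c w'"
    using tab unfolding cayley_table_def by fast+
  define w' where "w' = succs ! (i - 1)"
  have "zip [1..<n+1] succs ! (i - 1) = (i, w')" "i - 1 < length (zip [1..<n+1] succs)"
    using i len by (auto simp: w'_def simp del: upt_Suc)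
  then have "(i, w') \<in> set (zip [1..<n+1] succs)"
    by (metis nth_mem)
  then have w': "w' \<in> fst ` set tab" "length w' \<le> Suc (length w)"
    "wmatrix n c (i # w) = wmatrix n c w'"
    using succs by fast+
  moreover have "set w' \<subseteq> {1..n}"
    using cayley_table_letters[OF tab w'(1)] .
  ultimately show ?thesis
    using i w_letters wact_eq_iff_wmatrix_eq[of "i # w" n w' c] by auto
qed

lemma cayley_table_represents:
  assumes tab: "cayley_table n c tab" and ws: "set ws \<subseteq> {1..n}"
  shows "\<exists>w\<in>fst ` set tab. wact n c w = wact n c ws \<and> length w \<le> length ws"
  using ws
proof (induction ws)
  case Nil
  have "[] \<in> fst ` set tab"
    using tab by (simp add: cayley_table_def)
  then show ?case
    by force
next
  case (Cons i ws)
  then obtain w where w: "w \<in> fst ` set tab" "wact n c w = wact n c ws" "length w \<le> length ws"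
    by auto
  moreover have "i \<in> {1..n}"
    using Cons.prems by simp
  then obtain w' where "w' \<in> fst ` set tab" "wact n c (i # w) = wact n c w'"
    "length w' \<le> Suc (length w)"
    using cayley_table_step[OF tab w(1)] by blast
  ultimately show ?case
    by (auto simp: wact_def)
qed

lemma reduced_length_le:
  assumes "cayley_table n c tab" "\<forall>w\<in>fst ` set tab. length w \<le> L" "reduced n c ws"
  shows "length ws \<le> L"
proof -
  obtain w where "w \<in> fst ` set tab" "wact n c w = wact n c ws"
    using cayley_table_represents assms(1,3) by (metis reduced_def)
  moreover have "set w \<subseteq> {1..n}"
    using cayley_table_letters assms(1) \<open>w \<in> fst ` set tab\<close> .
  ultimately show ?thesis
    using assms(2,3) unfolding reduced_def by fastforce
qed

lemma reducedI_cayley_table: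
  assumes tab: "cayley_table n c tab" and w0: "set w0 \<subseteq> {1..n}"
    and shortest: "\<forall>w\<in>fst ` set tab. wmatrix n c w = wmatrix n c w0 \<longrightarrow> length w0 \<le> length w"
  shows "reduced n c w0"
  unfolding reduced_def
proof (intro conjI allI impI)
  fix vs assume vs: "set vs \<subseteq> {1..n} \<and> wact n c vs = wact n c w0"
  then obtain w where w: "w \<in> fst ` set tab" "wact n c w = wact n c vs" "length w \<le> length vs"
    using cayley_table_represents[OF tab] by blast
  moreover have "set w \<subseteq> {1..n}"
    using cayley_table_letters[OF tab w(1)] .
  ultimately have "wmatrix n c w = wmatrix n c w0"
    using vs w0 wact_eq_iff_wmatrix_eq by metis
  then show "length w0 \<le> length vs"
    using shortest w by fastforce
qed (rule w0)

lemma ud_eqI: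
  assumes tab: "cayley_table n c tab" and lengths: "\<forall>w\<in>fst ` set tab. length w \<le> L"
    and diag: "\<forall>i\<in>{1..n}. c i i \<noteq> 0"
    and w0: "reduced n c w0" "ddw n c w0 (monom m0) = 1" and deg: "mdeg m0 = L"
  shows "ud n c = L"
proof -
  let ?S = "{mdeg m | m. \<exists>ws. reduced n c ws \<and> ddw n c ws (monom m) = 1}"
  have bound: "d \<le> L" if d: "d \<in> ?S" for d
  proof -
    obtain m ws where m: "d = mdeg m" "reduced n c ws" "ddw n c ws (monom m) = 1"
      using d by blast
    have "i \<noteq> 0 \<and> alpha n c i \<noteq> 0" if "i \<in> set ws" for i
    proof -
      have "i \<in> {1..n}"
        using m(2) that by (auto simp: reduced_def)
      then show ?thesis
        using diag alpha_nonzero by simp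
    qed
    then have "\<forall>i\<in>set ws. i \<noteq> 0 \<and> alpha n c i \<noteq> 0"
      by blast
    then have "mdeg m \<le> length ws"
      using m(3) by (rule mdeg_le_length_if_ddw_eq_1)
    also have "length ws \<le> L"
      using reduced_length_le[OF tab lengths m(2)] .
    finally show ?thesis
      using m(1) by simp
  qed
  moreover have "L \<in> ?S"
    using w0 deg by blast
  moreover have "finite ?S"
    using bound by (intro finite_subset[OF _ finite_atMost]) blast
  ultimately show ?thesis
    unfolding ud_def by (intro Max_eqI) blast+
qed

section \<open>The types \<open>C\<^sub>3\<close> and \<open>C\<^sub>2\<close>\<close>

definition cayleyC3 :: "(nat list \<times> nat list list) list" where
  "cayleyC3 = [
    ([], [[1], [2], [3]]),
    ([1], [[], [2, 1], [3, 1]]),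
    ([2], [[1, 2], [], [3, 2]]),
    ([3], [[3, 1], [2, 3], []]),
    ([2, 1], [[1, 2, 1], [1], [3, 2, 1]]),
    ([3, 1], [[3], [2, 3, 1], [1]]),
    ([1, 2], [[2], [1, 2, 1], [3, 1, 2]]),
    ([3, 2], [[3, 1, 2], [2, 3, 2], [2]]),
    ([2, 3], [[1, 2, 3], [3], [3, 2, 3]]),
    ([1, 2, 1], [[2, 1], [1, 2], [3, 1, 2, 1]]),
    ([3, 2, 1], [[3, 1, 2, 1], [2, 3, 2, 1], [2, 1]]),
    ([2, 3, 1], [[1, 2, 3, 1], [3, 1], [3, 2, 3, 1]]),
    ([3, 1, 2], [[3, 2], [2, 3, 1, 2], [1, 2]]),
    ([2, 3, 2], [[1, 2, 3, 2], [3, 2], [3, 2, 3, 2]]),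
    ([1, 2, 3], [[2, 3], [1, 2, 3, 1], [3, 1, 2, 3]]),
    ([3, 2, 3], [[3, 1, 2, 3], [3, 2, 3, 2], [2, 3]]),
    ([3, 1, 2, 1], [[3, 2, 1], [2, 3, 1, 2, 1], [1, 2, 1]]),
    ([2, 3, 2, 1], [[1, 2, 3, 2, 1], [3, 2, 1], [3, 2, 3, 2, 1]]),
    ([1, 2, 3, 1], [[2, 3, 1], [1, 2, 3], [3, 1, 2, 3, 1]]),
    ([3, 2, 3, 1], [[3, 1, 2, 3, 1], [3, 2, 3, 2, 1], [2, 3, 1]]),
    ([2, 3, 1, 2], [[1, 2, 3, 1, 2], [3, 1, 2], [3, 2, 3, 1, 2]]),
    ([1, 2, 3, 2], [[2, 3, 2], [1, 2, 3, 1, 2], [3, 1, 2, 3, 2]]),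
    ([3, 2, 3, 2], [[3, 1, 2, 3, 2], [3, 2, 3], [2, 3, 2]]),
    ([3, 1, 2, 3], [[3, 2, 3], [2, 3, 1, 2, 3], [1, 2, 3]]),
    ([2, 3, 1, 2, 1], [[1, 2, 3, 1, 2, 1], [3, 1, 2, 1], [3, 2, 3, 1, 2, 1]]),
    ([1, 2, 3, 2, 1], [[2, 3, 2, 1], [1, 2, 3, 1, 2, 1], [3, 1, 2, 3, 2, 1]]),
    ([3, 2, 3, 2, 1], [[3, 1, 2, 3, 2, 1], [3, 2, 3, 1], [2, 3, 2, 1]]),
    ([3, 1, 2, 3, 1], [[3, 2, 3, 1], [2, 3, 1, 2, 3, 1], [1, 2, 3, 1]]),
    ([1, 2, 3, 1, 2], [[2, 3, 1, 2], [1, 2, 3, 2], [3, 1, 2, 3, 1, 2]]),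
    ([3, 2, 3, 1, 2], [[3, 1, 2, 3, 1, 2], [3, 2, 3, 1, 2, 1], [2, 3, 1, 2]]),
    ([3, 1, 2, 3, 2], [[3, 2, 3, 2], [2, 3, 1, 2, 3, 2], [1, 2, 3, 2]]),
    ([2, 3, 1, 2, 3], [[2, 3, 1, 2, 3, 2], [3, 1, 2, 3], [3, 2, 3, 1, 2, 3]]),
    ([1, 2, 3, 1, 2, 1], [[2, 3, 1, 2, 1], [1, 2, 3, 2, 1], [3, 1, 2, 3, 1, 2, 1]]),
    ([3, 2, 3, 1, 2, 1], [[3, 1, 2, 3, 1, 2, 1], [3, 2, 3, 1, 2], [2, 3, 1, 2, 1]]),
    ([3, 1, 2, 3, 2, 1], [[3, 2, 3, 2, 1], [2, 3, 1, 2, 3, 2, 1], [1, 2, 3, 2, 1]]),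
    ([2, 3, 1, 2, 3, 1], [[2, 3, 1, 2, 3, 2, 1], [3, 1, 2, 3, 1], [3, 2, 3, 1, 2, 3, 1]]),
    ([3, 1, 2, 3, 1, 2], [[3, 2, 3, 1, 2], [2, 3, 1, 2, 3, 1, 2], [1, 2, 3, 1, 2]]),
    ([2, 3, 1, 2, 3, 2], [[2, 3, 1, 2, 3], [3, 1, 2, 3, 2], [3, 2, 3, 1, 2, 3, 2]]),
    ([3, 2, 3, 1, 2, 3], [[3, 2, 3, 1, 2, 3, 2], [3, 2, 3, 1, 2, 3, 1], [2, 3, 1, 2, 3]]),
    ([3, 1, 2, 3, 1, 2, 1], [[3, 2, 3, 1, 2, 1], [2, 3, 1, 2, 3, 1, 2, 1], [1, 2, 3, 1, 2, 1]]),
    ([2, 3, 1, 2, 3, 2, 1], [[2, 3, 1, 2, 3, 1], [3, 1, 2, 3, 2, 1], [3, 2, 3, 1, 2, 3, 2, 1]]),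
    ([3, 2, 3, 1, 2, 3, 1], [[3, 2, 3, 1, 2, 3, 2, 1], [3, 2, 3, 1, 2, 3], [2, 3, 1, 2, 3, 1]]),
    ([2, 3, 1, 2, 3, 1, 2], [[2, 3, 1, 2, 3, 1, 2, 1], [3, 1, 2, 3, 1, 2], [3, 2, 3, 1, 2, 3, 1, 2]]),
    ([3, 2, 3, 1, 2, 3, 2], [[3, 2, 3, 1, 2, 3], [3, 2, 3, 1, 2, 3, 1, 2], [2, 3, 1, 2, 3, 2]]),
    ([2, 3, 1, 2, 3, 1, 2, 1], [[2, 3, 1, 2, 3, 1, 2], [3, 1, 2, 3, 1, 2, 1], [3, 2, 3, 1, 2, 3, 1, 2, 1]]),
    ([3, 2, 3, 1, 2, 3, 2, 1], [[3, 2, 3, 1, 2, 3, 1], [3, 2, 3, 1, 2, 3, 1, 2, 1], [2, 3, 1, 2, 3, 2, 1]]),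
    ([3, 2, 3, 1, 2, 3, 1, 2], [[3, 2, 3, 1, 2, 3, 1, 2, 1], [3, 2, 3, 1, 2, 3, 2], [2, 3, 1, 2, 3, 1, 2]]),
    ([3, 2, 3, 1, 2, 3, 1, 2, 1], [[3, 2, 3, 1, 2, 3, 1, 2], [3, 2, 3, 1, 2, 3, 2, 1], [2, 3, 1, 2, 3, 1, 2, 1]])]"

definition cayleyC2 :: "(nat list \<times> nat list list) list" where
  "cayleyC2 = [
    ([], [[1], [2]]),
    ([1], [[], [2, 1]]),
    ([2], [[1, 2], []]),
    ([2, 1], [[1, 2, 1], [1]]),
    ([1, 2], [[2], [2, 1, 2]]),
    ([1, 2, 1], [[2, 1], [2, 1, 2, 1]]),
    ([2, 1, 2], [[2, 1, 2, 1], [1, 2]]),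
    ([2, 1, 2, 1], [[2, 1, 2], [1, 2, 1]])]"

lemma cayley_table_C3: "cayley_table 3 cartanC3 cayleyC3"
  by code_simp

lemma cayley_table_C2: "cayley_table 2 cartanC2 cayleyC2"
  by code_simp

lemma sum_atLeastAtMost_1_3: "(\<Sum>k\<in>{1..3::nat}. f k) = f 1 + f 2 + f 3"
proof -
  have "{1..3::nat} = {1, 2, 3}"
    by auto
  then show ?thesis
    by (simp add: add.assoc)
qed

lemma alpha_cartanC3:
  "alpha 3 cartanC3 1 = 2 * X 1 - X 2"
  "alpha 3 cartanC3 2 = 2 * X 2 - X 1 - X 3"
  "alpha 3 cartanC3 3 = 2 * X 3 - 2 * X 2"
  unfolding alpha_eq_linear_form linear_form_def sum_atLeastAtMost_1_3
  by (simp_all add: cartanC3_def algebra_simps)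

lemma refl_cartanC3:
  "refl 3 cartanC3 1 (X 1) = X 2 - X 1" "refl 3 cartanC3 1 (X 2) = X 2" "refl 3 cartanC3 1 (X 3) = X 3"
  "refl 3 cartanC3 2 (X 1) = X 1" "refl 3 cartanC3 2 (X 2) = X 1 - X 2 + X 3" "refl 3 cartanC3 2 (X 3) = X 3"
  "refl 3 cartanC3 3 (X 1) = X 1" "refl 3 cartanC3 3 (X 2) = X 2" "refl 3 cartanC3 3 (X 3) = 2 * X 2 - X 3"
  unfolding refl_X alpha_cartanC3 by simp_all

lemma alpha_cartanC3_nonzero: "i \<in> {1..3} \<Longrightarrow> alpha 3 cartanC3 i \<noteq> 0"
  by (rule alpha_nonzero) (simp_all add: cartanC3_def)

lemma dd_cartanC3_eqI:
  "i \<in> {1..3} \<Longrightarrow> p - refl 3 cartanC3 i p = alpha 3 cartanC3 i * q \<Longrightarrow> dd 3 cartanC3 i p = q"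
  by (rule dd_eqI[OF alpha_cartanC3_nonzero])

lemma ddw_cartanC3_X2_cube: "ddw 3 cartanC3 [2, 3, 2] (X 2 ^ 3) = 1"
proof -
  have "dd 3 cartanC3 2 (X 2 ^ 3) = X 1 ^ 2 - X 1 * X 2 + 2 * X 1 * X 3 + X 2 ^ 2 - X 2 * X 3 + X 3 ^ 2"
    by (rule dd_cartanC3_eqI) (simp, simp only: refl_simps refl_cartanC3 alpha_cartanC3, algebra)
  moreover have "dd 3 cartanC3 3 (X 1 ^ 2 - X 1 * X 2 + 2 * X 1 * X 3 + X 2 ^ 2 - X 2 * X 3 + X 3 ^ 2)
      = 2 * X 1 + X 2"
    by (rule dd_cartanC3_eqI) (simp, simp only: refl_simps refl_cartanC3 alpha_cartanC3, algebra)
  moreover have "dd 3 cartanC3 2 (2 * X 1 + X 2) = 1"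
    by (rule dd_cartanC3_eqI) (simp, simp only: refl_simps refl_cartanC3 alpha_cartanC3, algebra)
  ultimately show ?thesis
    by simp
qed

lemma ddw_cartanC3_X1_fifth: "ddw 3 cartanC3 [1, 2, 3, 2, 1] (X 1 ^ 5) = 1"
proof -
  have "dd 3 cartanC3 1 (X 1 ^ 5)
      = X 1 ^ 4 - 2 * X 1 ^ 3 * X 2 + 4 * X 1 ^ 2 * X 2 ^ 2 - 3 * X 1 * X 2 ^ 3 + X 2 ^ 4"
    by (rule dd_cartanC3_eqI) (simp, simp only: refl_simps refl_cartanC3 alpha_cartanC3, algebra)
  moreover have "dd 3 cartanC3 2
      (X 1 ^ 4 - 2 * X 1 ^ 3 * X 2 + 4 * X 1 ^ 2 * X 2 ^ 2 - 3 * X 1 * X 2 ^ 3 + X 2 ^ 4)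
      = X 1 ^ 2 * X 2 + X 1 ^ 2 * X 3 - X 1 * X 2 ^ 2 - X 1 * X 2 * X 3 + 2 * X 2 ^ 2 * X 3
        - 2 * X 2 * X 3 ^ 2 + X 3 ^ 3"
    by (rule dd_cartanC3_eqI) (simp, simp only: refl_simps refl_cartanC3 alpha_cartanC3, algebra)
  moreover have "dd 3 cartanC3 3
      (X 1 ^ 2 * X 2 + X 1 ^ 2 * X 3 - X 1 * X 2 ^ 2 - X 1 * X 2 * X 3 + 2 * X 2 ^ 2 * X 3
        - 2 * X 2 * X 3 ^ 2 + X 3 ^ 3)
      = X 1 ^ 2 - X 1 * X 2 + 2 * X 2 ^ 2 - 2 * X 2 * X 3 + X 3 ^ 2"
    by (rule dd_cartanC3_eqI) (simp, simp only: refl_simps refl_cartanC3 alpha_cartanC3, algebra)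
  moreover have "dd 3 cartanC3 2 (X 1 ^ 2 - X 1 * X 2 + 2 * X 2 ^ 2 - 2 * X 2 * X 3 + X 3 ^ 2) = X 1"
    by (rule dd_cartanC3_eqI) (simp, simp only: refl_simps refl_cartanC3 alpha_cartanC3, algebra)
  moreover have "dd 3 cartanC3 1 (X 1) = 1"
    by (rule dd_X_self[OF alpha_cartanC3_nonzero]) simp
  ultimately show ?thesis
    by simp
qed

lemma ddw_cartanC3_longest: "ddw 3 cartanC3 [1, 2, 3, 2, 1, 2, 3, 2, 3] (X 1 ^ 5 * X 2 ^ 3 * X 3) = 1"
proof -
  have "dd 3 cartanC3 3 (X 1 ^ 5 * X 2 ^ 3 * X 3) = X 1 ^ 5 * X 2 ^ 3 * dd 3 cartanC3 3 (X 3)"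
    by (rule dd_mult_invariant) (simp_all add: alpha_cartanC3_nonzero refl_cartanC3 del: One_nat_def)
  also have "\<dots> = X 1 ^ 5 * X 2 ^ 3"
    by (simp add: dd_X_self alpha_cartanC3_nonzero)
  finally have "ddw 3 cartanC3 [2, 3, 2, 3] (X 1 ^ 5 * X 2 ^ 3 * X 3) = ddw 3 cartanC3 [2, 3, 2] (X 1 ^ 5 * X 2 ^ 3)"
    by simp
  also have "\<dots> = X 1 ^ 5 * ddw 3 cartanC3 [2, 3, 2] (X 2 ^ 3)"
    by (rule ddw_mult_invariant) (simp add: alpha_cartanC3_nonzero refl_cartanC3 del: One_nat_def)
  finally have "ddw 3 cartanC3 [2, 3, 2, 3] (X 1 ^ 5 * X 2 ^ 3 * X 3) = X 1 ^ 5"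
    by (simp only: ddw_cartanC3_X2_cube mult_1_right)
  then show ?thesis
    using ddw_append[of 3 cartanC3 "[1, 2, 3, 2, 1]" "[2, 3, 2, 3]"]
    by (simp only: append_Cons append_Nil ddw_cartanC3_X1_fifth)
qed

lemma ud_cartanC3: "ud 3 cartanC3 = 9"
proof (rule ud_eqI[OF cayley_table_C3])
  let ?m = "Poly_Mapping.single 1 5 + Poly_Mapping.single 2 3 + Poly_Mapping.single (3::nat) 1"
  show "\<forall>w\<in>fst ` set cayleyC3. length w \<le> 9"
    by code_simp
  show "\<forall>i\<in>{1..3}. cartanC3 i i \<noteq> 0"
    by (simp add: cartanC3_def)
  show "reduced 3 cartanC3 [1, 2, 3, 2, 1, 2, 3, 2, 3]"
    by (rule reducedI_cayley_table[OF cayley_table_C3]) (simp, code_simp)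
  show "ddw 3 cartanC3 [1, 2, 3, 2, 1, 2, 3, 2, 3] (monom ?m) = 1"
    using ddw_cartanC3_longest by (simp add: monom_add flip: X_power)
  show "mdeg ?m = 9"
    by (simp add: mdeg_add mdeg_single)
qed

lemma alpha_cartanC2:
  "alpha 2 cartanC2 1 = 2 * X 1 - X 2"
  "alpha 2 cartanC2 2 = 2 * X 2 - 2 * X 1"
  unfolding alpha_eq_linear_form linear_form_def
  by (simp_all add: cartanC2_def numeral_2_eq_2 algebra_simps)

lemma refl_cartanC2:
  "refl 2 cartanC2 1 (X 1) = X 2 - X 1" "refl 2 cartanC2 1 (X 2) = X 2"
  "refl 2 cartanC2 2 (X 1) = X 1" "refl 2 cartanC2 2 (X 2) = 2 * X 1 - X 2"
  unfolding refl_X alpha_cartanC2 by simp_all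

lemma alpha_cartanC2_nonzero: "i \<in> {1..2} \<Longrightarrow> alpha 2 cartanC2 i \<noteq> 0"
  by (rule alpha_nonzero) (simp_all add: cartanC2_def)

lemma dd_cartanC2_eqI:
  "i \<in> {1..2} \<Longrightarrow> p - refl 2 cartanC2 i p = alpha 2 cartanC2 i * q \<Longrightarrow> dd 2 cartanC2 i p = q"
  by (rule dd_eqI[OF alpha_cartanC2_nonzero])

lemma ddw_cartanC2_longest: "ddw 2 cartanC2 [1, 2, 1, 2] (X 1 ^ 3 * X 2) = 1"
proof -
  have "dd 2 cartanC2 2 (X 1 ^ 3 * X 2) = X 1 ^ 3 * dd 2 cartanC2 2 (X 2)"
    by (rule dd_mult_invariant) (simp_all add: alpha_cartanC2_nonzero refl_cartanC2 del: One_nat_def)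
  also have "\<dots> = X 1 ^ 3"
    by (simp add: dd_X_self alpha_cartanC2_nonzero)
  finally have "dd 2 cartanC2 2 (X 1 ^ 3 * X 2) = X 1 ^ 3" .
  moreover have "dd 2 cartanC2 1 (X 1 ^ 3) = X 1 ^ 2 - X 1 * X 2 + X 2 ^ 2"
    by (rule dd_cartanC2_eqI) (simp, simp only: refl_simps refl_cartanC2 alpha_cartanC2, algebra)
  moreover have "dd 2 cartanC2 2 (X 1 ^ 2 - X 1 * X 2 + X 2 ^ 2) = X 1"
    by (rule dd_cartanC2_eqI) (simp, simp only: refl_simps refl_cartanC2 alpha_cartanC2, algebra)
  moreover have "dd 2 cartanC2 1 (X 1) = 1"
    by (rule dd_X_self[OF alpha_cartanC2_nonzero]) simp
  ultimately show ?thesis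
    by simp
qed

lemma ud_cartanC2: "ud 2 cartanC2 = 4"
proof (rule ud_eqI[OF cayley_table_C2])
  let ?m = "Poly_Mapping.single 1 3 + Poly_Mapping.single (2::nat) 1"
  show "\<forall>w\<in>fst ` set cayleyC2. length w \<le> 4"
    by code_simp
  show "\<forall>i\<in>{1..2}. cartanC2 i i \<noteq> 0"
    by (simp add: cartanC2_def)
  show "reduced 2 cartanC2 [1, 2, 1, 2]"
    by (rule reducedI_cayley_table[OF cayley_table_C2]) (simp, code_simp)
  show "ddw 2 cartanC2 [1, 2, 1, 2] (monom ?m) = 1"
    using ddw_cartanC2_longest by (simp add: monom_add flip: X_power)
  show "mdeg ?m = 4"
    by (simp add: mdeg_add mdeg_single)
qed

theorem mainTheorem6:
  shows "dd 3 cartanC3 3 (X 3) = 1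
    \<and> ddw 3 cartanC3 [2, 3, 2] (X 2 ^ 3) = 1
    \<and> ddw 3 cartanC3 [1, 2, 3, 2, 1] (X 1 ^ 5) = 1
    \<and> ddw 3 cartanC3 [1, 2, 3, 2, 1, 2, 3, 2, 3] (X 1 ^ 5 * X 2 ^ 3 * X 3) = 1
    \<and> ud 3 cartanC3 = 9
    \<and> ud 2 cartanC2 = 4"
  using dd_X_self[OF alpha_cartanC3_nonzero, of 3] ddw_cartanC3_X2_cube ddw_cartanC3_X1_fifth
    ddw_cartanC3_longest ud_cartanC3 ud_cartanC2
  by simp

end
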